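(* Let $n\ge 1$. Write vectors of $\mathbb{R}^n$ as $x=(x_0,\dots,x_{n-1})$. Let $B:\mathbb{R}^n\times\mathbb{R}^n\to\mathbb{R}^{2n}$ be the symmetric bilinear map whose first component is $0$ and whose $(k+2)$-th component, for $k=0,1,\dots,2n-2$, is $\sum_{i+j=k} x_iy_j$ (sum over $0\le i,j\le n-1$). Let $C:\mathbb{R}^n\times\mathbb{R}^n\times\mathbb{R}^n\to\mathbb{R}^{2n}$ be the symmetric trilinear map $$C(x,y,z) = (x_0y_0z_0,\ x_1y_1z_1,\ \dots,\ x_{n-1}y_{n-1}z_{n-1},\ 0,\dots,0).$$ Define $f:\mathbb{R}^n\to\mathbb{R}^n\times\mathbb{R}^{2n}=\mathbb{R}^{3n}$ by $f(x) = \left(x,\ \tfrac12 B(x,x)+\tfrac16 C(x,x,x)\right)$. Then $f$ satisfies the local condition at $x=0$: every solution $(v_1,v_2,v_3,\lambda)\in\mathbb{R}^n\times\mathbb{R}^n\times\mathbb{R}^n\times\mathbb{R}$ of $Df_0(v_1)+D^2f_0(v_2,v_3)+\lambda D^3f_0(v_3,v_3,v_3)=0$ with $v_3\neq 0$ has $v_1=0$, $v_2=0$, $\lambda=0$.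
   Context: For a smooth $f:\mathbb{R}^n\to\mathbb{R}^N$ and $a\in\mathbb{R}^n$, $D^kf_a$ denotes the symmetric $k$-linear map $(\mathbb{R}^n)^k\to\mathbb{R}^N$ of $k$-th order partial derivatives, defined on the standard basis by $D^kf_a(e_{i_1},\dots,e_{i_k}) = \frac{\partial^k f}{\partial x_{i_1}\cdots\partial x_{i_k}}(a)$; $D^1f_a=Df_a$. *)

theory Defs
  imports "HOL-Analysis.Analysis"
begin

text \<open>Vectors of R^n are represented as functions nat => real; only the
components with index < n matter (a vector "in R^n" additionally has all
components with index >= n equal to 0).\<close>

definition pderiv_at :: "((nat \<Rightarrow> real) \<Rightarrow> real) \<Rightarrow> nat \<Rightarrow> (nat \<Rightarrow> real) \<Rightarrow> real" where
  "pderiv_at g i a = deriv (\<lambda>t. g (a(i := a i + t))) 0"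

fun iter_pderiv :: "((nat \<Rightarrow> real) \<Rightarrow> real) \<Rightarrow> nat list \<Rightarrow> (nat \<Rightarrow> real) \<Rightarrow> real" where
  "iter_pderiv g [] = g"
| "iter_pderiv g (i # is) = pderiv_at (iter_pderiv g is) i"

text \<open>D^k f_a(v_1,...,v_k) for f : R^n -> R^N: the k-linear map whose values on
standard basis vectors are the k-th order partial derivatives of f at a,
extended multilinearly.\<close>
definition Dk :: "nat \<Rightarrow> ((nat \<Rightarrow> real) \<Rightarrow> (nat \<Rightarrow> real)) \<Rightarrow> (nat \<Rightarrow> real)
                  \<Rightarrow> (nat \<Rightarrow> real) list \<Rightarrow> (nat \<Rightarrow> real)" where
  "Dk n f a vs = (\<lambda>m. \<Sum>is\<in>{is. set is \<subseteq> {..<n} \<and> length is = length vs}.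
       (\<Prod>j<length vs. (vs ! j) (is ! j)) * iter_pderiv (\<lambda>x. f x m) is a)"

text \<open>B : R^n x R^n -> R^{2n}, 0-based component c (c < 2n): component 0 is 0,
component k+1 (k = 0..2n-2) is sum_{i+j=k, i,j<n} x_i y_j.\<close>
definition Bmap :: "nat \<Rightarrow> (nat \<Rightarrow> real) \<Rightarrow> (nat \<Rightarrow> real) \<Rightarrow> (nat \<Rightarrow> real)" where
  "Bmap n x y = (\<lambda>c. if c = 0 \<or> c \<ge> 2 * n then 0
       else \<Sum>(i, j)\<in>{(i, j). i < n \<and> j < n \<and> i + j = c - 1}. x i * y j)"

definition Cmap :: "nat \<Rightarrow> (nat \<Rightarrow> real) \<Rightarrow> (nat \<Rightarrow> real) \<Rightarrow> (nat \<Rightarrow> real) \<Rightarrow> (nat \<Rightarrow> real)" where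
  "Cmap n x y z = (\<lambda>c. if c < n then x c * y c * z c else 0)"

text \<open>f : R^n -> R^n x R^{2n} = R^{3n}, f(x) = (x, B(x,x)/2 + C(x,x,x)/6);
output component m < n is x_m, component n + c (c < 2n) is the c-th component
of B(x,x)/2 + C(x,x,x)/6; components >= 3n are 0.\<close>
definition fmap :: "nat \<Rightarrow> (nat \<Rightarrow> real) \<Rightarrow> (nat \<Rightarrow> real)" where
  "fmap n x = (\<lambda>m. if m < n then x m
       else if m < 3 * n then Bmap n x x (m - n) / 2 + Cmap n x x x (m - n) / 6
       else 0)"

end

theory Submission
  imports Defs "HOL-Computational_Algebra.Polynomial"
begin

text \<open>Every component of \<open>f\<close> is a polynomial of degree at most three with diagonal cubic part,
and such polynomials are closed under partial differentiation. Reading off their derivatives at the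
origin gives \<open>Df\<^sub>0 v = (v, 0)\<close>, \<open>D\<^sup>2f\<^sub>0(v, w) = (0, B(v, w))\<close> and \<open>D\<^sup>3f\<^sub>0(u, v, w) = (0, C(u, v, w))\<close>.
Identifying a vector \<open>v\<close> with the polynomial \<open>P v = \<Sum> v i X\<^sup>i\<close>, the vector \<open>B(v, w)\<close> is the
coefficient sequence of \<open>X \<cdot> P v \<cdot> P w\<close>. So the equation says \<open>v1 = 0\<close> and, for every \<open>c\<close>,
\<open>[X\<^sup>c] (X \<cdot> P v2 \<cdot> P v3) + \<lambda> (v3 c)\<^sup>3 = 0\<close>. At the least \<open>c\<close> with \<open>v3 c \<noteq> 0\<close> the product term
vanishes, so \<open>\<lambda> = 0\<close>; then \<open>P v2 \<cdot> P v3 = 0\<close> with \<open>P v3 \<noteq> 0\<close> forces \<open>v2 = 0\<close>.\<close>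

lemma sum_lessThan_diagonal3:
  fixes f :: "nat \<Rightarrow> nat \<Rightarrow> nat \<Rightarrow> 'a::comm_semiring_1"
  shows "(\<Sum>i<n. \<Sum>j<n. \<Sum>k<n. of_bool (k = i \<and> j = i) * f i j k) = (\<Sum>i<n. f i i i)"
proof -
  have "(\<Sum>k<n. of_bool (k = i \<and> j = i) * f i j k) = of_bool (j = i) * f i j i" if "i < n" for i j
    using that by (cases "j = i") auto
  then show ?thesis
    by simp
qed

lemma sum_lessThan_delta2:
  fixes f :: "nat \<Rightarrow> nat \<Rightarrow> 'a::comm_semiring_1"
  assumes "k < n"
  shows "(\<Sum>i<n. \<Sum>j<n. of_bool (i = k \<and> j = k) * f i j) = f k k"
proof -
  have "(\<Sum>j<n. of_bool (i = k \<and> j = k) * f i j) = of_bool (i = k) * f i k" for i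
    using assms by (cases "i = k") auto
  then show ?thesis
    using assms by simp
qed

lemma Dk_one:
  "Dk n F a [u] m = (\<Sum>i<n. u i * iter_pderiv (\<lambda>x. F x m) [i] a)"
proof -
  have "{is. set is \<subseteq> {..<n} \<and> length is = length [u]} = (\<lambda>i. [i]) ` {..<n}"
    by (auto simp: length_Suc_conv)
  then show ?thesis
    by (simp add: Dk_def sum.reindex inj_on_def)
qed

lemma Dk_two:
  "Dk n F a [u, v] m = (\<Sum>i<n. \<Sum>j<n. u i * v j * iter_pderiv (\<lambda>x. F x m) [i, j] a)"
proof -
  have "{is. set is \<subseteq> {..<n} \<and> length is = length [u, v]} = (\<lambda>(i, j). [i, j]) ` ({..<n} \<times> {..<n})"
    by (auto simp: length_Suc_conv)
  then show ?thesis
    by (auto simp: Dk_def sum.reindex inj_on_def sum.cartesian_product intro!: sum.cong)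
qed

lemma Dk_three:
  "Dk n F a [u, v, w] m =
     (\<Sum>i<n. \<Sum>j<n. \<Sum>k<n. u i * v j * w k * iter_pderiv (\<lambda>x. F x m) [i, j, k] a)"
proof -
  have "{is. set is \<subseteq> {..<n} \<and> length is = length [u, v, w]}
      = (\<lambda>(i, j, k). [i, j, k]) ` ({..<n} \<times> {..<n} \<times> {..<n})"
    by (auto simp: length_Suc_conv image_iff)
  then show ?thesis
    by (auto simp: Dk_def sum.reindex inj_on_def sum.cartesian_product numeral_3_eq_3 intro!: sum.cong)
qed

definition diag_cubic_poly ::
    "nat \<Rightarrow> real \<Rightarrow> (nat \<Rightarrow> real) \<Rightarrow> (nat \<Rightarrow> nat \<Rightarrow> real) \<Rightarrow> (nat \<Rightarrow> real)
      \<Rightarrow> (nat \<Rightarrow> real) \<Rightarrow> real" where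
  "diag_cubic_poly n c L Q K x =
     c + (\<Sum>i<n. L i * x i) + (\<Sum>i<n. \<Sum>j<n. Q i j * x i * x j) + (\<Sum>i<n. K i * x i ^ 3)"

lemma diag_cubic_poly_at_0: "diag_cubic_poly n c L Q K (\<lambda>_. 0) = c"
  by (simp add: diag_cubic_poly_def)

lemma pderiv_at_diag_cubic_poly:
  assumes k: "k < n"
  shows "pderiv_at (diag_cubic_poly n c L Q K) k =
    diag_cubic_poly n (L k) (\<lambda>j. Q k j + Q j k) (\<lambda>i j. of_bool (i = k \<and> j = k) * 3 * K k) (\<lambda>_. 0)"
proof
  fix a :: "nat \<Rightarrow> real"
  let ?e = "\<lambda>i. of_bool (i = k) :: real"
  have shift: "a(k := a k + t) = (\<lambda>i. a i + ?e i * t)" for t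
    by auto
  have "(\<Sum>i<n. \<Sum>j<n. Q i j * (?e i * a j + a i * ?e j))
      = (\<Sum>i<n. \<Sum>j<n. ?e i * (Q i j * a j)) + (\<Sum>i<n. \<Sum>j<n. ?e j * (Q i j * a i))"
    by (simp add: distrib_left sum.distrib mult_ac)
  also have "(\<Sum>i<n. \<Sum>j<n. ?e i * (Q i j * a j)) = (\<Sum>j<n. \<Sum>i<n. ?e i * (Q i j * a j))"
    by (rule sum.swap)
  finally have quadratic: "(\<Sum>i<n. \<Sum>j<n. Q i j * (?e i * a j + a i * ?e j)) = (\<Sum>j<n. (Q k j + Q j k) * a j)"
    using k by (simp add: sum.distrib distrib_right)
  have "(\<Sum>i<n. K i * (3 * a i ^ 2 * ?e i)) = (\<Sum>i<n. ?e i * (3 * K i * a i * a i))"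
    by (simp add: power2_eq_square mult_ac)
  also have "\<dots> = (\<Sum>i<n. \<Sum>j<n. of_bool (i = k \<and> j = k) * 3 * K k * a i * a j)"
    using k sum_lessThan_delta2[OF k, of "\<lambda>i j. 3 * K k * a i * a j"] by (simp add: mult.assoc)
  finally have cubic: "(\<Sum>i<n. K i * (3 * a i ^ 2 * ?e i))
      = (\<Sum>i<n. \<Sum>j<n. of_bool (i = k \<and> j = k) * 3 * K k * a i * a j)" .
  have "((\<lambda>t. diag_cubic_poly n c L Q K (a(k := a k + t))) has_real_derivative
      (\<Sum>i<n. L i * ?e i) + (\<Sum>i<n. \<Sum>j<n. Q i j * (?e i * a j + a i * ?e j))
      + (\<Sum>i<n. K i * (3 * a i ^ 2 * ?e i))) (at 0)"
    unfolding shift diag_cubic_poly_def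
    by (auto intro!: derivative_eq_intros simp: algebra_simps)
  then show "pderiv_at (diag_cubic_poly n c L Q K) k a =
      diag_cubic_poly n (L k) (\<lambda>j. Q k j + Q j k) (\<lambda>i j. of_bool (i = k \<and> j = k) * 3 * K k) (\<lambda>_. 0) a"
    using k unfolding pderiv_at_def quadratic cubic
    by (simp add: DERIV_imp_deriv diag_cubic_poly_def)
qed

lemma iter_pderiv_diag_cubic_poly_at_0:
  assumes "i < n" "j < n" "k < n"
  shows "iter_pderiv (diag_cubic_poly n c L Q K) [i] (\<lambda>_. 0) = L i"
    and "iter_pderiv (diag_cubic_poly n c L Q K) [i, j] (\<lambda>_. 0) = Q i j + Q j i"
    and "iter_pderiv (diag_cubic_poly n c L Q K) [i, j, k] (\<lambda>_. 0) = of_bool (k = i \<and> j = i) * 6 * K i"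
  using assms by (auto simp: pderiv_at_diag_cubic_poly diag_cubic_poly_at_0)

lemma Bmap_eq_double_sum:
  "Bmap n x y c = (\<Sum>i<n. \<Sum>j<n. of_bool (i + j + 1 = c) * x i * y j)"
proof -
  have "(\<Sum>i<n. \<Sum>j<n. of_bool (i + j + 1 = c) * x i * y j)
      = (\<Sum>(i, j)\<in>{..<n} \<times> {..<n}. of_bool (i + j + 1 = c) * (x i * y j))"
    by (simp add: sum.cartesian_product mult.assoc del: sum_of_bool_mult_eq)
  also have "\<dots> = (\<Sum>(i, j)\<in>{(i, j). i < n \<and> j < n \<and> i + j + 1 = c}. x i * y j)"
    by (rule sum.mono_neutral_cong_right) auto
  also have "\<dots> = Bmap n x y c"
  proof (cases "c = 0 \<or> 2 * n \<le> c")
    case True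
    then show ?thesis
      by (auto simp: Bmap_def intro!: sum.neutral)
  next
    case False
    then have "{(i, j). i < n \<and> j < n \<and> i + j + 1 = c} = {(i, j). i < n \<and> j < n \<and> i + j = c - 1}"
      by auto
    with False show ?thesis
      by (simp add: Bmap_def)
  qed
  finally show ?thesis ..
qed

lemma fmap_component_linear:
  "m < n \<Longrightarrow> (\<lambda>x. fmap n x m) = diag_cubic_poly n 0 (\<lambda>i. of_bool (i = m)) (\<lambda>_ _. 0) (\<lambda>_. 0)"
  by (auto simp: fmap_def diag_cubic_poly_def)

lemma fmap_component_nonlinear:
  assumes "n \<le> m" "m < 3 * n"
  shows "(\<lambda>x. fmap n x m) =
    diag_cubic_poly n 0 (\<lambda>_. 0) (\<lambda>i j. of_bool (i + j + 1 = m - n) / 2) (\<lambda>i. of_bool (i = m - n) / 6)"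
proof
  fix x
  have "(\<Sum>i<n. of_bool (i = m - n) / 6 * x i ^ 3) = Cmap n x x x (m - n) / 6"
    by (simp add: Cmap_def power3_eq_cube flip: sum_divide_distrib)
  then show "fmap n x m = diag_cubic_poly n 0 (\<lambda>_. 0) (\<lambda>i j. of_bool (i + j + 1 = m - n) / 2)
      (\<lambda>i. of_bool (i = m - n) / 6) x"
    using assms by (simp add: fmap_def diag_cubic_poly_def Bmap_eq_double_sum sum_divide_distrib)
qed

lemma Dk_fmap_one:
  assumes "m < 3 * n"
  shows "Dk n (fmap n) (\<lambda>_. 0) [u] m = (if m < n then u m else 0)"
proof (cases "m < n")
  case True
  then show ?thesis
    by (simp add: Dk_one fmap_component_linear iter_pderiv_diag_cubic_poly_at_0 mult.commute del: iter_pderiv.simps)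
next
  case False
  with assms show ?thesis
    by (simp add: Dk_one fmap_component_nonlinear iter_pderiv_diag_cubic_poly_at_0 del: iter_pderiv.simps)
qed

lemma Dk_fmap_two:
  assumes "m < 3 * n"
  shows "Dk n (fmap n) (\<lambda>_. 0) [u, v] m = (if m < n then 0 else Bmap n u v (m - n))"
proof (cases "m < n")
  case True
  then show ?thesis
    by (simp add: Dk_two fmap_component_linear iter_pderiv_diag_cubic_poly_at_0 del: iter_pderiv.simps)
next
  case False
  then have "n \<le> m"
    by simp
  have "Dk n (fmap n) (\<lambda>_. 0) [u, v] m
      = (\<Sum>i<n. \<Sum>j<n. of_bool (i + j + 1 = m - n) * u i * v j)"
    unfolding Dk_two fmap_component_nonlinear[OF \<open>n \<le> m\<close> assms]
    by (intro sum.cong refl) (simp add: iter_pderiv_diag_cubic_poly_at_0 add.commute del: iter_pderiv.simps)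
  with False show ?thesis
    by (simp add: Bmap_eq_double_sum)
qed

lemma Dk_fmap_three:
  assumes "m < 3 * n"
  shows "Dk n (fmap n) (\<lambda>_. 0) [u, v, w] m = (if m < n then 0 else Cmap n u v w (m - n))"
proof (cases "m < n")
  case True
  then show ?thesis
    by (simp add: Dk_three fmap_component_linear iter_pderiv_diag_cubic_poly_at_0 del: iter_pderiv.simps)
next
  case False
  then have "n \<le> m"
    by simp
  have "Dk n (fmap n) (\<lambda>_. 0) [u, v, w] m
      = (\<Sum>i<n. \<Sum>j<n. \<Sum>k<n. of_bool (k = i \<and> j = i) * (of_bool (i = m - n) * (u i * v j * w k)))"
    unfolding Dk_three fmap_component_nonlinear[OF \<open>n \<le> m\<close> assms]
    by (intro sum.cong refl) (simp add: iter_pderiv_diag_cubic_poly_at_0 del: iter_pderiv.simps)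
  also have "\<dots> = (\<Sum>i<n. of_bool (i = m - n) * (u i * v i * w i))"
    by (rule sum_lessThan_diagonal3)
  also have "\<dots> = Cmap n u v w (m - n)"
    by (simp add: Cmap_def)
  finally show ?thesis
    using False by simp
qed

definition vec_poly :: "nat \<Rightarrow> (nat \<Rightarrow> 'a::zero) \<Rightarrow> 'a poly" where
  "vec_poly n v = Poly (map v [0..<n])"

lemma coeff_vec_poly: "coeff (vec_poly n v) i = (if i < n then v i else 0)"
  by (simp add: vec_poly_def nth_default_def)

lemma vec_poly_eq_0_iff:
  assumes "\<forall>i\<ge>n. v i = 0"
  shows "vec_poly n v = 0 \<longleftrightarrow> v = (\<lambda>_. 0)"
  using assms by (auto simp: poly_eq_iff coeff_vec_poly) (meson not_less)

lemma coeff_mult_vec_poly: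
  fixes x y :: "nat \<Rightarrow> 'a::comm_semiring_1"
  shows "coeff (vec_poly n x * vec_poly n y) k = (\<Sum>i<n. \<Sum>j<n. of_bool (i + j = k) * x i * y j)"
proof -
  have inner: "(\<Sum>j<n. of_bool (i + j = k) * x i * y j) = of_bool (i \<le> k \<and> k - i < n) * x i * y (k - i)" for i
  proof -
    have "{..<n} \<inter> {j. i + j = k} = (if i \<le> k \<and> k - i < n then {k - i} else {})"
      by auto
    then show ?thesis
      by (simp add: mult.assoc)
  qed
  have "coeff (vec_poly n x * vec_poly n y) k = (\<Sum>i\<le>k. of_bool (i < n \<and> k - i < n) * x i * y (k - i))"
    by (auto simp: coeff_mult coeff_vec_poly intro: sum.cong)
  also have "\<dots> = (\<Sum>i<n. of_bool (i \<le> k \<and> k - i < n) * x i * y (k - i))"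
    by (rule sum.mono_neutral_cong) auto
  finally show ?thesis by (simp add: inner)
qed

lemma Bmap_eq_coeff_vec_poly:
  "Bmap n x y c = coeff (pCons 0 (vec_poly n x * vec_poly n y)) c"
  by (cases c) (simp_all add: Bmap_eq_double_sum coeff_mult_vec_poly)

lemma Cmap_eq_coeff_vec_poly: "Cmap n x x x c = coeff (vec_poly n x) c ^ 3"
  by (simp add: Cmap_def coeff_vec_poly power3_eq_cube)

lemma coeff_mult_eq_0_below:
  fixes p q :: "'a::comm_semiring_0 poly"
  assumes "\<forall>i<d. coeff q i = 0" and "k < d"
  shows "coeff (p * q) k = 0"
  using assms by (auto simp: coeff_mult intro!: sum.neutral)

lemma shifted_product_plus_power_coeffs_eq_0:
  fixes p q :: "'a::idom poly"
  assumes eq: "\<forall>c. coeff (pCons 0 (p * q)) c + lam * coeff q c ^ e = 0" and "q \<noteq> 0"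
  shows "lam = 0 \<and> p = 0"
proof -
  define d where "d = (LEAST d. coeff q d \<noteq> 0)"
  have "\<exists>d. coeff q d \<noteq> 0"
    using \<open>q \<noteq> 0\<close> by (metis leading_coeff_0_iff)
  then have qd: "coeff q d \<noteq> 0"
    unfolding d_def by (rule LeastI_ex)
  have "\<forall>i<d. coeff q i = 0"
    unfolding d_def using not_less_Least by blast
  then have "coeff (pCons 0 (p * q)) d = 0"
    by (cases d) (auto intro: coeff_mult_eq_0_below)
  with eq qd have "lam = 0"
    by (metis add_0 mult_eq_0_iff power_eq_0_iff)
  with eq have "pCons 0 (p * q) = 0"
    by (intro poly_eqI) simp
  with \<open>q \<noteq> 0\<close> \<open>lam = 0\<close> show ?thesis
    by simp
qed

theorem theorem3p1:
  fixes n :: nat and v1 v2 v3 :: "nat \<Rightarrow> real" and lam :: real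
  assumes "n \<ge> 1"
    and "\<forall>i\<ge>n. v1 i = 0" and "\<forall>i\<ge>n. v2 i = 0" and "\<forall>i\<ge>n. v3 i = 0"
    and "\<forall>m<3 * n. Dk n (fmap n) (\<lambda>_. 0) [v1] m + Dk n (fmap n) (\<lambda>_. 0) [v2, v3] m
                     + lam * Dk n (fmap n) (\<lambda>_. 0) [v3, v3, v3] m = 0"
    and "v3 \<noteq> (\<lambda>_. 0)"
  shows "v1 = (\<lambda>_. 0) \<and> v2 = (\<lambda>_. 0) \<and> lam = 0"
proof -
  let ?p = "vec_poly n v2" and ?q = "vec_poly n v3"
  have v1: "v1 m = 0" for m
    using assms(2) spec[OF assms(5), of m]
    by (cases "m < n") (simp_all add: Dk_fmap_one Dk_fmap_two Dk_fmap_three)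
  have "Bmap n v2 v3 c + lam * Cmap n v3 v3 v3 c = 0" for c
  proof (cases "c < 2 * n")
    case True
    then show ?thesis
      using spec[OF assms(5), of "n + c"] by (simp add: Dk_fmap_one Dk_fmap_two Dk_fmap_three)
  qed (simp add: Bmap_def Cmap_def)
  then have "\<forall>c. coeff (pCons 0 (?p * ?q)) c + lam * coeff ?q c ^ 3 = 0"
    by (simp add: Bmap_eq_coeff_vec_poly Cmap_eq_coeff_vec_poly)
  moreover have "?q \<noteq> 0"
    using vec_poly_eq_0_iff[OF assms(4)] assms(6) by simp
  ultimately have "lam = 0 \<and> ?p = 0"
    by (rule shifted_product_plus_power_coeffs_eq_0)
  with v1 vec_poly_eq_0_iff[OF assms(3)] show ?thesis
    by auto
qed

end
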